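(* Let $\varsigma=(\varsigma_1,\dots,\varsigma_K)\in\Gamma(\mathscr M_1)\oplus\dots\oplus\Gamma(\mathscr M_K)$ have the boundary decomposition property, and let $0\le m<r_K$. Suppose that every $\varsigma_k$ has an $m$-th subdiagonal matrix representation. Then there is a continuous section $G\in\Gamma(\mathscr V^{(m)})$ such that \[G|_{\alpha^i(\overline{Y_k})}=\varsigma_k^{(i)}\circ\alpha^{-i}|_{\alpha^i(\overline{Y_k})}\quad\text{for all }1\le k\le K,\ 0\le i\le r_k-1,\] and, provided $m\ge 1$, $G$ vanishes on $\alpha^{-m}(Y)\cup\alpha^{-m+1}(Y)\cup\dots\cup\alpha^{-1}(Y)$.
   Context: Let $X$ be an infinite compact metric space, $\alpha:X\to X$ a minimal homeomorphism, $\mathscr V$ a Hermitian complex line bundle over $X$, and $Y\subset X$ closed with non-empty interior. For $y\in Y$ let $r_Y(y)=\min\{n\ge1:\alpha^n(y)\in Y\}$, with distinct values $r_1<\dots<r_K$, and $Y_k=\{y\in Y:r_Y(y)=r_k\}$. Let $\mathscr V^{(0)}=X\times\mathbb C$ and $\mathscr V^{(n)}=(\alpha^{n-1})^*\mathscr V\otimes\cdots\otimes\alpha^*\mathscr V\otimes\mathscr V$, so $\mathscr V^{(n)}_x=\mathscr V_{\alpha^{n-1}(x)}\otimes\cdots\otimes\mathscr V_x=\mathscr V^{(n-m)}_{\alpha^m(x)}\otimes\mathscr V^{(m)}_x$ for $0\le m\le n$; $\Gamma(\mathscr V^{(m)})$ is its space of continuous sections. Let $\mathscr D^{(n)}=\mathscr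 V^{(0)}\oplus\cdots\oplus\mathscr V^{(n-1)}$, $\mathscr M_k=\mathrm{End}(\mathscr D^{(r_k)})|_{\overline{Y_k}}$ and $\Gamma(\mathscr M_k)$ its continuous sections. $\varsigma_k\in\Gamma(\mathscr M_k)$ has an $m$-th (lower) subdiagonal matrix representation if for every $x\in\overline{Y_k}$, $\varsigma_k(x)$ maps $\mathscr V^{(i)}_x$ into $\mathscr V^{(i+m)}_x$ for $i<r_k-m$ and maps $\mathscr V^{(i)}_x$ to $0$ for $r_k-m\le i<r_k$ (so $\varsigma_k=0$ if $m\ge r_k$). In that case, since all these spaces are one-dimensional, for $i<r_k-m$ there is a unique $\varsigma_k^{(i)}(x)\in\mathscr V^{(m)}_{\alpha^i(x)}$ with $\varsigma_k(x)v=\varsigma_k^{(i)}(x)\otimes v$ for $v\in\mathscr V^{(i)}_x$ (using $\mathscr V^{(i+m)}_x=\mathscr V^{(m)}_{\alpha^i(x)}\otimes\mathscr V^{(i)}_x$), and $\varsigma_k^{(i)}(x):=0$ for $r_k-m\le i\le r_k-1$. Boundary decomposition property: $\varsigma=(\varsigma_1,\dots,\varsigma_K)$ has it if for every $k$ and every $x\in\overline{Y_k}\setminus Y_k$ the following holds. There are indices $t_1,\dots,t_m<k$ with $r_{t_1}+\dots+r_{t_m}=r_k$ and $x\in Y_{t_1}\cap\alpha^{-r_{t_1}}(Y_{t_2})\cap\dots\cap\alpha^{-(r_{t_1}+\dots+r_{t_{m-1}})}(Y_{t_m})$. Let $R_0=0$, $R_s=r_{t_1}+\dots+r_{t_s}$,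 and identify the $s$-th component $\mathscr V^{(R_{s-1})}_x\oplus\dots\oplus\mathscr V^{(R_s-1)}_x$ of $\mathscr D^{(r_k)}_x$ with $\mathscr D^{(r_{t_s})}_{\alpha^{R_{s-1}}(x)}\otimes\mathscr V^{(R_{s-1})}_x$. The requirement is that $\varsigma_k(x)$ restricted to the $s$-th component equals $\varsigma_{t_s}(\alpha^{R_{s-1}}(x))\otimes\mathrm{id}_{\mathscr V^{(R_{s-1})}_x}$ for every $s$. *)

theory Defs
  imports "HOL-Analysis.Analysis"
begin

text \<open>The space X is the (compact metric) type 'a. A Hermitian line bundle V over X
is modelled as a continuous line subbundle L of a trivial bundle X \<times> ('n \<Rightarrow> complex), 'n finite,
with the induced Hermitian metric. Fibres of V^(n) are lines inside 'n list \<Rightarrow> complex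
(supported on lists of length n), built as iterated tensor products.\<close>

definition minimal_homeo :: "('a::topological_space \<Rightarrow> 'a) \<Rightarrow> bool" where
  "minimal_homeo \<alpha> \<longleftrightarrow> bij \<alpha> \<and> continuous_on UNIV \<alpha> \<and> continuous_on UNIV (inv \<alpha>) \<and>
     (\<forall>C. closed C \<and> \<alpha> ` C = C \<longrightarrow> C = {} \<or> C = UNIV)"

definition line_bundle :: "('a::topological_space \<Rightarrow> ('n \<Rightarrow> complex) set) \<Rightarrow> bool" where
  "line_bundle L \<longleftrightarrow> (\<forall>x. \<exists>U s. open U \<and> x \<in> U \<and> (\<forall>i. continuous_on U (\<lambda>y. s y i)) \<and>
      (\<forall>y\<in>U. s y \<noteq> (\<lambda>i. 0) \<and> L y = {(\<lambda>i. c * s y i) | c. True}))"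

definition lift1 :: "('n \<Rightarrow> complex) \<Rightarrow> ('n list \<Rightarrow> complex)" where
  "lift1 w l = (case l of [a] \<Rightarrow> w a | _ \<Rightarrow> 0)"

text \<open>tens k w v: the element w \<otimes> v, where v lies in a fibre of V^(k) at x and w in a fibre
at alpha^k x; realises V^(k+j)_x = V^(j)_(alpha^k x) \<otimes> V^(k)_x.\<close>
definition tens :: "nat \<Rightarrow> ('n list \<Rightarrow> complex) \<Rightarrow> ('n list \<Rightarrow> complex) \<Rightarrow> ('n list \<Rightarrow> complex)" where
  "tens k w v l = w (drop k l) * v (take k l)"

fun fib :: "('a \<Rightarrow> 'a) \<Rightarrow> ('a \<Rightarrow> ('n \<Rightarrow> complex) set) \<Rightarrow> nat \<Rightarrow> 'a \<Rightarrow> ('n list \<Rightarrow> complex) set" where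
  "fib \<alpha> L 0 x = {(\<lambda>l. if l = [] then c else 0) | c. True}"
| "fib \<alpha> L (Suc n) x = {tens n (lift1 w) v | w v. w \<in> L ((\<alpha> ^^ n) x) \<and> v \<in> fib \<alpha> L n x}"

text \<open>Fibre of D^(n) = V^(0) \<oplus> ... \<oplus> V^(n-1) (components have disjoint supports).\<close>
definition Dfib :: "('a \<Rightarrow> 'a) \<Rightarrow> ('a \<Rightarrow> ('n \<Rightarrow> complex) set) \<Rightarrow> nat \<Rightarrow> 'a \<Rightarrow> ('n list \<Rightarrow> complex) set" where
  "Dfib \<alpha> L n x = {v. (\<forall>l. n \<le> length l \<longrightarrow> v l = 0) \<and>
      (\<forall>j<n. (\<lambda>l. if length l = j then v l else 0) \<in> fib \<alpha> L j x)}"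

text \<open>Continuity of a section (product topology = coordinatewise).\<close>
definition cont_sec :: "'a::topological_space set \<Rightarrow> ('a \<Rightarrow> ('n list \<Rightarrow> complex)) \<Rightarrow> bool" where
  "cont_sec S G \<longleftrightarrow> (\<forall>l. continuous_on S (\<lambda>x. G x l))"

definition End_section :: "('a::topological_space \<Rightarrow> 'a) \<Rightarrow> ('a \<Rightarrow> ('n \<Rightarrow> complex) set) \<Rightarrow> nat \<Rightarrow> 'a set
     \<Rightarrow> ('a \<Rightarrow> ('n list \<Rightarrow> complex) \<Rightarrow> ('n list \<Rightarrow> complex)) \<Rightarrow> bool" where
  "End_section \<alpha> L n S \<sigma> \<longleftrightarrow>
     (\<forall>x\<in>S. (\<forall>u\<in>Dfib \<alpha> L n x. \<sigma> x u \<in> Dfib \<alpha> L n x) \<and>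
        (\<forall>u\<in>Dfib \<alpha> L n x. \<forall>v\<in>Dfib \<alpha> L n x. \<forall>c.
            \<sigma> x (\<lambda>l. c * u l + v l) = (\<lambda>l. c * \<sigma> x u l + \<sigma> x v l))) \<and>
     (\<forall>v. cont_sec S v \<and> (\<forall>y\<in>S. v y \<in> Dfib \<alpha> L n y) \<longrightarrow> cont_sec S (\<lambda>y. \<sigma> y (v y)))"

definition subdiag :: "('a \<Rightarrow> 'a) \<Rightarrow> ('a \<Rightarrow> ('n \<Rightarrow> complex) set) \<Rightarrow> nat \<Rightarrow> nat \<Rightarrow> 'a set
     \<Rightarrow> ('a \<Rightarrow> ('n list \<Rightarrow> complex) \<Rightarrow> ('n list \<Rightarrow> complex)) \<Rightarrow> bool" where
  "subdiag \<alpha> L r m S \<sigma> \<longleftrightarrow> (\<forall>x\<in>S. \<forall>i<r. \<forall>v\<in>fib \<alpha> L i x.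
      (if i + m < r then \<sigma> x v \<in> fib \<alpha> L (i + m) x else \<sigma> x v = (\<lambda>l. 0)))"

definition coef :: "('a \<Rightarrow> 'a) \<Rightarrow> ('a \<Rightarrow> ('n \<Rightarrow> complex) set) \<Rightarrow> nat \<Rightarrow> nat
     \<Rightarrow> ('a \<Rightarrow> ('n list \<Rightarrow> complex) \<Rightarrow> ('n list \<Rightarrow> complex)) \<Rightarrow> nat \<Rightarrow> 'a \<Rightarrow> ('n list \<Rightarrow> complex)" where
  "coef \<alpha> L r m \<sigma> i x = (if i + m < r then
      (THE w. w \<in> fib \<alpha> L m ((\<alpha> ^^ i) x) \<and> (\<forall>v\<in>fib \<alpha> L i x. \<sigma> x v = tens i w v))
     else (\<lambda>l. 0))"

definition rY :: "('a \<Rightarrow> 'a) \<Rightarrow> 'a set \<Rightarrow> 'a \<Rightarrow> nat" where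
  "rY \<alpha> Y y = (LEAST n. 1 \<le> n \<and> (\<alpha> ^^ n) y \<in> Y)"

text \<open>The set of return times {r_1 < ... < r_K}; sets Y_k are indexed by the value r_k.\<close>
definition Rset :: "('a \<Rightarrow> 'a) \<Rightarrow> 'a set \<Rightarrow> nat set" where
  "Rset \<alpha> Y = rY \<alpha> Y ` Y"

definition Ysub :: "('a \<Rightarrow> 'a) \<Rightarrow> 'a set \<Rightarrow> nat \<Rightarrow> 'a set" where
  "Ysub \<alpha> Y n = {y \<in> Y. rY \<alpha> Y y = n}"

definition bdp :: "('a::topological_space \<Rightarrow> 'a) \<Rightarrow> ('a \<Rightarrow> ('n \<Rightarrow> complex) set) \<Rightarrow> 'a set
     \<Rightarrow> (nat \<Rightarrow> 'a \<Rightarrow> ('n list \<Rightarrow> complex) \<Rightarrow> ('n list \<Rightarrow> complex)) \<Rightarrow> bool" where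
  "bdp \<alpha> L Y \<sigma> \<longleftrightarrow> (\<forall>n\<in>Rset \<alpha> Y. \<forall>x \<in> closure (Ysub \<alpha> Y n) - Ysub \<alpha> Y n.
     \<exists>ts. set ts \<subseteq> Rset \<alpha> Y \<and> (\<forall>t\<in>set ts. t < n) \<and> sum_list ts = n \<and>
       (\<forall>s<length ts. (\<alpha> ^^ sum_list (take s ts)) x \<in> Ysub \<alpha> Y (ts ! s)) \<and>
       (\<forall>s<length ts. \<forall>u\<in>Dfib \<alpha> L (ts ! s) ((\<alpha> ^^ sum_list (take s ts)) x).
          \<forall>w\<in>fib \<alpha> L (sum_list (take s ts)) x.
            \<sigma> n x (tens (sum_list (take s ts)) u w) =
            tens (sum_list (take s ts)) (\<sigma> (ts ! s) ((\<alpha> ^^ sum_list (take s ts)) x) u) w))"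

end

theory Submission
  imports Defs
begin

text \<open>Every point \<open>x\<close> lies on exactly one level of the Kakutani-Rokhlin towers over \<open>Y\<close>:
  \<open>x = \<alpha>^j z\<close> with \<open>z \<in> Y\<close> the last visit of the backward orbit of \<open>x\<close> to \<open>Y\<close> and \<open>j < r_Y(z)\<close>;
  put \<open>G(x) = \<sigma>^(j)(z)\<close>. At a boundary point \<open>y\<close> of \<open>Y_k\<close> the boundary decomposition makes
  \<open>\<sigma>_k(y)\<close> block diagonal, the blocks being \<open>\<sigma>_t\<close> at later points of the orbit, so each coefficient
  of \<open>\<sigma>_k(y)\<close> is one of a block, i.e. a value of \<open>G\<close>. Hence \<open>G = \<sigma>_k^(i) \<circ> \<alpha>^-i\<close> on each of the
  sets \<open>\<alpha>^i(closure Y_k)\<close>; by minimality and compactness the return times are bounded, so these are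
  finitely many closed sets covering \<open>X\<close>. Coefficients of a continuous endomorphism section are
  continuous, so \<open>G\<close> is continuous by pasting. If \<open>\<alpha>^j x \<in> Y\<close> with \<open>1 \<le> j \<le> m\<close>, then \<open>x\<close> lies in
  the top \<open>m\<close> levels of its tower, where the \<open>m\<close>-th subdiagonal coefficients vanish.\<close>

section \<open>Fibres of the tensor powers\<close>

lemma tens_assoc: "tens R (tens j a b) c = tens (R + j) a (tens R b c)"
  unfolding tens_def by (auto simp: fun_eq_iff take_drop drop_drop take_take add.commute)

lemma tens_scale_left: "tens k (\<lambda>l. c * w l) v = (\<lambda>l. c * tens k w v l)"
  by (simp add: tens_def fun_eq_iff)

lemma tens_scale_right: "tens k w (\<lambda>l. c * v l) = (\<lambda>l. c * tens k w v l)"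
  by (simp add: tens_def fun_eq_iff)

lemma tens_zero_left [simp]: "tens k (\<lambda>l. 0) v = (\<lambda>l. 0)"
  by (simp add: tens_def fun_eq_iff)

lemma tens_append: "length l0 = i \<Longrightarrow> tens i w v (l0 @ l) = w l * v l0"
  by (simp add: tens_def)

lemma tens_right_cancel:
  assumes "length l0 = i" "e l0 \<noteq> 0" "tens i w e = tens i w' e"
  shows "w = w'"
proof
  fix l
  have "tens i w e (l0 @ l) = tens i w' e (l0 @ l)" using assms(3) by simp
  then show "w l = w' l" using assms(1,2) by (simp add: tens_append)
qed

lemma lift1_scale: "lift1 (\<lambda>i. c * w i) = (\<lambda>l. c * lift1 w l)"
  by (auto simp: fun_eq_iff lift1_def split: list.split)

lemma fib_support: "v \<in> fib \<alpha> L n x \<Longrightarrow> length l \<noteq> n \<Longrightarrow> v l = 0"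
proof (induction n arbitrary: v l)
  case (Suc n)
  then obtain w u where v: "v = tens n (lift1 w) u" and u: "u \<in> fib \<alpha> L n x" by auto
  show ?case
  proof (cases "length (take n l) = n")
    case True
    then have "length (drop n l) \<noteq> 1" using Suc.prems(2) by auto
    then have "lift1 w (drop n l) = 0"
      by (auto simp: lift1_def split: list.split dest: arg_cong[where f = length])
    then show ?thesis by (simp add: v tens_def)
  next
    case False
    then show ?thesis using Suc.IH[OF u] by (simp add: v tens_def)
  qed
qed auto

lemma fib_split:
  assumes "v \<in> fib \<alpha> L (i + j) x"
  shows "\<exists>u w. u \<in> fib \<alpha> L j ((\<alpha> ^^ i) x) \<and> w \<in> fib \<alpha> L i x \<and> v = tens i u w"
  using assms
proof (induction j arbitrary: v)
  case 0
  have "v = tens i (\<lambda>l. if l = [] then 1 else 0) v"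
    using fib_support[OF 0[simplified]] by (auto simp: tens_def fun_eq_iff)
  with 0 show ?case by fastforce
next
  case (Suc j)
  then obtain w v' where v: "v = tens (i + j) (lift1 w) v'"
    and w: "w \<in> L ((\<alpha> ^^ j) ((\<alpha> ^^ i) x))" and v': "v' \<in> fib \<alpha> L (i + j) x"
    by (auto simp: funpow_add add.commute[of i])
  obtain u' w' where "u' \<in> fib \<alpha> L j ((\<alpha> ^^ i) x)" "w' \<in> fib \<alpha> L i x" "v' = tens i u' w'"
    using Suc.IH[OF v'] by blast
  with v w show ?case
    by (intro exI[of _ "tens j (lift1 w) u'"] exI[of _ w']) (auto simp: tens_assoc)
qed

section \<open>Continuous frames\<close>

lemma continuous_on_by_open_nbhds:
  assumes "\<And>x. x \<in> S \<Longrightarrow> \<exists>V. open V \<and> x \<in> V \<and> continuous_on (S \<inter> V) f"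
  shows "continuous_on S f"
proof (unfold continuous_on_def, intro ballI)
  fix x assume "x \<in> S"
  then obtain V where V: "open V" "x \<in> V" "continuous_on (S \<inter> V) f" using assms by blast
  then have "(f \<longlongrightarrow> f x) (at x within S \<inter> V)"
    using \<open>x \<in> S\<close> unfolding continuous_on_def by blast
  moreover have "at x within S = at x within S \<inter> V"
    by (rule at_within_nhd[OF V(2,1)]) blast
  ultimately show "(f \<longlongrightarrow> f x) (at x within S)" by simp
qed

lemma continuous_on_funpow:
  fixes f :: "'a::topological_space \<Rightarrow> 'a"
  assumes "continuous_on UNIV f"
  shows "continuous_on UNIV (f ^^ n)"
proof (induction n)
  case (Suc n)
  have "continuous_on UNIV (f \<circ> (f ^^ n))"
    by (rule continuous_on_compose[OF Suc continuous_on_subset[OF assms subset_UNIV]])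
  then show ?case by simp
qed (simp add: continuous_on_id')

definition hinner :: "('n::finite \<Rightarrow> complex) \<Rightarrow> ('n \<Rightarrow> complex) \<Rightarrow> complex" where
  "hinner a b = (\<Sum>k\<in>UNIV. a k * cnj (b k))"

lemma hinner_scale_left: "hinner (\<lambda>i. c * a i) b = c * hinner a b"
  unfolding hinner_def by (simp add: sum_distrib_left mult_ac)

lemma hinner_scale_right: "hinner a (\<lambda>i. c * b i) = cnj c * hinner a b"
  unfolding hinner_def by (simp add: sum_distrib_left mult_ac)

lemma hinner_self_nonzero:
  assumes "s \<noteq> (\<lambda>i. 0)"
  shows "hinner s s \<noteq> 0"
proof
  assume "hinner s s = 0"
  moreover have "of_real (\<Sum>k\<in>UNIV. (cmod (s k))\<^sup>2) = hinner s s"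
    by (simp only: hinner_def of_real_sum complex_norm_square)
  ultimately have "(\<Sum>k\<in>UNIV. (cmod (s k))\<^sup>2) = 0"
    by (metis of_real_eq_0_iff)
  then have "\<forall>k. s k = 0"
    by (simp add: sum_nonneg_eq_0_iff)
  with assms show False by (auto simp: fun_eq_iff)
qed

definition line_basis :: "('a \<Rightarrow> ('n \<Rightarrow> complex) set) \<Rightarrow> 'a \<Rightarrow> 'n \<Rightarrow> complex" where
  "line_basis L y = (SOME s. s \<noteq> (\<lambda>i. 0) \<and> L y = {(\<lambda>i. c * s i) | c. True})"

lemma line_basis_spans:
  assumes "line_bundle L"
  shows "line_basis L y \<noteq> (\<lambda>i. 0)" and "L y = {(\<lambda>i. c * line_basis L y i) | c. True}"
proof -
  obtain U s where "y \<in> U" and "\<forall>y\<in>U. s y \<noteq> (\<lambda>i. 0) \<and> L y = {(\<lambda>i. c * s y i) | c. True}"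
    using assms unfolding line_bundle_def by meson
  then have "\<exists>s. s \<noteq> (\<lambda>i. 0) \<and> L y = {(\<lambda>i. c * s i) | c. True}" by blast
  from someI_ex[OF this] show "line_basis L y \<noteq> (\<lambda>i. 0)" "L y = {(\<lambda>i. c * line_basis L y i) | c. True}"
    unfolding line_basis_def by blast+
qed

definition line_proj :: "('a \<Rightarrow> ('n::finite \<Rightarrow> complex) set) \<Rightarrow> 'a \<Rightarrow> ('n \<Rightarrow> complex) \<Rightarrow> 'n \<Rightarrow> complex" where
  "line_proj L y a =
     (\<lambda>k. hinner a (line_basis L y) / hinner (line_basis L y) (line_basis L y) * line_basis L y k)"

lemma line_proj_in: "line_bundle L \<Longrightarrow> line_proj L y a \<in> L y"
  unfolding line_proj_def by (subst line_basis_spans(2)) blast+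

lemma line_proj_basis:
  assumes "line_bundle L"
  shows "line_proj L y (line_basis L y) = line_basis L y"
  unfolding line_proj_def using hinner_self_nonzero[OF line_basis_spans(1)[OF assms]] by simp

lemma line_proj_eq:
  assumes "line_bundle L" "s \<noteq> (\<lambda>i. 0)" "L y = {(\<lambda>i. c * s i) | c. True}"
  shows "line_proj L y a = (\<lambda>k. hinner a s / hinner s s * s k)"
proof -
  have "line_basis L y \<in> L y"
    by (subst line_basis_spans(2)[OF assms(1)]) (auto intro: exI[of _ 1])
  then obtain c where c: "line_basis L y = (\<lambda>i. c * s i)" unfolding assms(3) by blast
  then have "c \<noteq> 0" using line_basis_spans(1)[OF assms(1), of y] by auto
  then show ?thesis
    using hinner_self_nonzero[OF assms(2)]
    by (auto simp: line_proj_def c hinner_scale_left hinner_scale_right fun_eq_iff field_simps)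
qed

lemma continuous_on_line_proj:
  assumes "line_bundle L"
  shows "continuous_on UNIV (\<lambda>y. line_proj L y a k)"
proof (rule continuous_on_by_open_nbhds)
  fix x
  obtain U s where U: "open U" "x \<in> U" and s: "\<forall>i. continuous_on U (\<lambda>y. s y i)"
    and span: "\<forall>y\<in>U. s y \<noteq> (\<lambda>i. 0) \<and> L y = {(\<lambda>i. c * s y i) | c. True}"
    using assms unfolding line_bundle_def by meson
  have "continuous_on U (\<lambda>y. hinner a (s y) / hinner (s y) (s y) * s y k)"
    unfolding hinner_def using span hinner_self_nonzero
    by (intro continuous_intros s[rule_format]) (auto simp: hinner_def)
  moreover have "line_proj L y a k = hinner a (s y) / hinner (s y) (s y) * s y k" if "y \<in> U" for y
    using line_proj_eq[OF assms, of "s y"] span that by simp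
  ultimately have "continuous_on (UNIV \<inter> U) (\<lambda>y. line_proj L y a k)"
    by (simp cong: continuous_on_cong)
  with U show "\<exists>V. open V \<and> x \<in> V \<and> continuous_on (UNIV \<inter> V) (\<lambda>y. line_proj L y a k)"
    by blast
qed

text \<open>End_section only applies \<open>\<sigma>\<close> to globally continuous sections, so local frames of the line
  bundle do not suffice: projecting the basis vectors along the orbit of \<open>x0\<close> onto the fibres gives a
  global continuous section of \<open>V^(n)\<close> that is non-zero near \<open>x0\<close>.\<close>
primrec proj_frame :: "('a \<Rightarrow> 'a) \<Rightarrow> ('a \<Rightarrow> ('n::finite \<Rightarrow> complex) set) \<Rightarrow> 'a \<Rightarrow> nat \<Rightarrow> 'a
    \<Rightarrow> 'n list \<Rightarrow> complex" where
  "proj_frame \<alpha> L x0 0 x = (\<lambda>l. if l = [] then 1 else 0)"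
| "proj_frame \<alpha> L x0 (Suc n) x =
     tens n (lift1 (line_proj L ((\<alpha> ^^ n) x) (line_basis L ((\<alpha> ^^ n) x0)))) (proj_frame \<alpha> L x0 n x)"

lemma proj_frame_in_fib:
  assumes "line_bundle L"
  shows "proj_frame \<alpha> L x0 n x \<in> fib \<alpha> L n x"
  by (induction n) (use line_proj_in[OF assms] in auto)

lemma proj_frame_nonzero:
  assumes "line_bundle L"
  shows "\<exists>l0. length l0 = n \<and> proj_frame \<alpha> L x n x l0 \<noteq> 0"
proof (induction n)
  case (Suc n)
  then obtain l0 where l0: "length l0 = n" "proj_frame \<alpha> L x n x l0 \<noteq> 0" by blast
  obtain k where k: "line_basis L ((\<alpha> ^^ n) x) k \<noteq> 0"
    using line_basis_spans(1)[OF assms] by (auto simp: fun_eq_iff)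
  have "proj_frame \<alpha> L x (Suc n) x (l0 @ [k]) = line_basis L ((\<alpha> ^^ n) x) k * proj_frame \<alpha> L x n x l0"
    using l0(1) by (simp add: tens_append lift1_def line_proj_basis[OF assms])
  with l0 k show ?case by (intro exI[of _ "l0 @ [k]"]) auto
qed simp

lemma fib_eq_span:
  assumes "line_bundle L"
  shows "fib \<alpha> L n x = {(\<lambda>l. c * proj_frame \<alpha> L x n x l) | c. True}"
proof (induction n)
  case 0
  show ?case by (auto simp: fun_eq_iff)
next
  case (Suc n)
  let ?s = "line_basis L ((\<alpha> ^^ n) x)"
  have L: "L ((\<alpha> ^^ n) x) = {(\<lambda>i. c * ?s i) | c. True}" by (rule line_basis_spans(2)[OF assms])
  have frame: "proj_frame \<alpha> L x (Suc n) x = tens n (lift1 ?s) (proj_frame \<alpha> L x n x)"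
    by (simp add: line_proj_basis[OF assms])
  show ?case
  proof (intro set_eqI iffI)
    fix v assume "v \<in> fib \<alpha> L (Suc n) x"
    then obtain c1 c2 where "v = tens n (lift1 (\<lambda>i. c1 * ?s i)) (\<lambda>l. c2 * proj_frame \<alpha> L x n x l)"
      unfolding fib.simps L Suc by blast
    then have "v = (\<lambda>l. (c1 * c2) * proj_frame \<alpha> L x (Suc n) x l)"
      by (simp add: frame lift1_scale tens_scale_left tens_scale_right mult.assoc del: proj_frame.simps)
    then show "v \<in> {(\<lambda>l. c * proj_frame \<alpha> L x (Suc n) x l) | c. True}" by blast
  next
    fix v assume "v \<in> {(\<lambda>l. c * proj_frame \<alpha> L x (Suc n) x l) | c. True}"
    then obtain c where "v = tens n (lift1 (\<lambda>i. c * ?s i)) (\<lambda>l. 1 * proj_frame \<alpha> L x n x l)"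
      by (auto simp: frame lift1_scale tens_scale_left simp del: proj_frame.simps)
    then show "v \<in> fib \<alpha> L (Suc n) x"
      unfolding fib.simps L Suc by blast
  qed
qed

lemma zero_in_fib:
  fixes L :: "'a::topological_space \<Rightarrow> ('n::finite \<Rightarrow> complex) set"
  assumes "line_bundle L"
  shows "(\<lambda>l. 0) \<in> fib \<alpha> L n x"
  by (subst fib_eq_span[OF assms]) (auto intro!: exI[of _ 0])

lemma continuous_on_proj_frame:
  assumes "line_bundle L" "continuous_on UNIV \<alpha>"
  shows "continuous_on UNIV (\<lambda>x. proj_frame \<alpha> L x0 n x l)"
proof (induction n arbitrary: l)
  case (Suc n)
  have "continuous_on UNIV (\<lambda>x. lift1 (line_proj L ((\<alpha> ^^ n) x) (line_basis L ((\<alpha> ^^ n) x0))) (drop n l))"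
  proof (cases "drop n l")
    case (Cons a t)
    then show ?thesis
      by (cases t) (auto simp: lift1_def intro!: continuous_on_compose2[OF continuous_on_line_proj[OF assms(1)]
            continuous_on_funpow[OF assms(2)]])
  qed (simp add: lift1_def)
  with Suc show ?case by (auto simp: tens_def intro: continuous_on_mult)
qed simp

section \<open>Coefficients of subdiagonal endomorphisms\<close>

lemma fib_scale:
  fixes L :: "'a::topological_space \<Rightarrow> ('n::finite \<Rightarrow> complex) set"
  assumes "line_bundle L" "v \<in> fib \<alpha> L n x"
  shows "(\<lambda>l. c * v l) \<in> fib \<alpha> L n x"
proof -
  obtain c' where "v = (\<lambda>l. c' * proj_frame \<alpha> L x n x l)"
    using assms(2) unfolding fib_eq_span[OF assms(1)] by blast
  then show ?thesis
    unfolding fib_eq_span[OF assms(1)] by (auto intro!: exI[of _ "c * c'"])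
qed

lemma fib_in_Dfib:
  fixes L :: "'a::topological_space \<Rightarrow> ('n::finite \<Rightarrow> complex) set"
  assumes "line_bundle L" "i < n" "v \<in> fib \<alpha> L i x"
  shows "v \<in> Dfib \<alpha> L n x"
proof -
  have "(\<lambda>l. if length l = j then v l else 0) = (if j = i then v else (\<lambda>l. 0))" for j
    using fib_support[OF assms(3)] by (auto simp: fun_eq_iff)
  then show ?thesis
    using assms fib_support[OF assms(3)] zero_in_fib[OF assms(1)] by (auto simp: Dfib_def)
qed

lemma End_section_scale:
  fixes L :: "'a::topological_space \<Rightarrow> ('n::finite \<Rightarrow> complex) set"
  assumes "line_bundle L" "End_section \<alpha> L n S \<sigma>" "y \<in> S" "u \<in> Dfib \<alpha> L n y"
  shows "\<sigma> y (\<lambda>l. c * u l) = (\<lambda>l. c * \<sigma> y u l)"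
proof -
  have lin: "\<sigma> y (\<lambda>l. c * u l + v l) = (\<lambda>l. c * \<sigma> y u l + \<sigma> y v l)"
    if "u \<in> Dfib \<alpha> L n y" "v \<in> Dfib \<alpha> L n y" for c u v
    using assms(2,3) that unfolding End_section_def by blast
  have zero: "(\<lambda>l. 0) \<in> Dfib \<alpha> L n y"
    using zero_in_fib[OF assms(1)] by (simp add: Dfib_def)
  have "\<sigma> y (\<lambda>l. 0) = (\<lambda>l. 0)"
    using lin[OF zero zero, of 1] by (simp add: fun_eq_iff)
  with lin[OF assms(4) zero, of c] show ?thesis by simp
qed

lemma coef_eqI:
  fixes L :: "'a::topological_space \<Rightarrow> ('n::finite \<Rightarrow> complex) set"
  assumes "line_bundle L" "i + m < n" "w \<in> fib \<alpha> L m ((\<alpha> ^^ i) y)"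
    and "\<forall>v\<in>fib \<alpha> L i y. \<sigma> y v = tens i w v"
  shows "coef \<alpha> L n m \<sigma> i y = w"
  unfolding coef_def
proof (simp add: assms(2), rule the_equality)
  show "w \<in> fib \<alpha> L m ((\<alpha> ^^ i) y) \<and> (\<forall>v\<in>fib \<alpha> L i y. \<sigma> y v = tens i w v)"
    using assms(3,4) ..
next
  fix w' assume w': "w' \<in> fib \<alpha> L m ((\<alpha> ^^ i) y) \<and> (\<forall>v\<in>fib \<alpha> L i y. \<sigma> y v = tens i w' v)"
  let ?e = "proj_frame \<alpha> L y i y"
  obtain l0 where "length l0 = i" "?e l0 \<noteq> 0" using proj_frame_nonzero[OF assms(1)] by blast
  moreover have "tens i w' ?e = tens i w ?e"
    using w' assms(4) proj_frame_in_fib[OF assms(1)] by metis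
  ultimately show "w' = w" by (rule tens_right_cancel)
qed

lemma coef_eq_zero:
  fixes L :: "'a::topological_space \<Rightarrow> ('n::finite \<Rightarrow> complex) set"
  assumes "line_bundle L" "\<forall>v\<in>fib \<alpha> L i y. \<sigma> y v = (\<lambda>l. 0)"
  shows "coef \<alpha> L n m \<sigma> i y = (\<lambda>l. 0)"
proof (cases "i + m < n")
  case True
  with assms show ?thesis by (intro coef_eqI zero_in_fib) auto
qed (simp add: coef_def)

lemma coef_tens:
  fixes L :: "'a::topological_space \<Rightarrow> ('n::finite \<Rightarrow> complex) set"
  assumes lb: "line_bundle L" and "End_section \<alpha> L n S \<sigma>" "subdiag \<alpha> L n m S \<sigma>" "y \<in> S"
    and "i + m < n"
  shows "coef \<alpha> L n m \<sigma> i y \<in> fib \<alpha> L m ((\<alpha> ^^ i) y)"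
    and "\<forall>v\<in>fib \<alpha> L i y. \<sigma> y v = tens i (coef \<alpha> L n m \<sigma> i y) v"
proof -
  let ?e = "proj_frame \<alpha> L y i y"
  have e: "?e \<in> fib \<alpha> L i y" by (rule proj_frame_in_fib[OF lb])
  then have "\<sigma> y ?e \<in> fib \<alpha> L (i + m) y"
    using assms(3-5) unfolding subdiag_def by auto
  from fib_split[OF this] obtain u w where u: "u \<in> fib \<alpha> L m ((\<alpha> ^^ i) y)" and w: "w \<in> fib \<alpha> L i y"
    and "\<sigma> y ?e = tens i u w"
    by blast
  moreover obtain d where "w = (\<lambda>l. d * ?e l)"
    using w unfolding fib_eq_span[OF lb] by blast
  ultimately have \<sigma>e: "\<sigma> y ?e = tens i (\<lambda>l. d * u l) ?e"
    by (simp add: tens_scale_left tens_scale_right)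
  have all: "\<forall>v\<in>fib \<alpha> L i y. \<sigma> y v = tens i (\<lambda>l. d * u l) v"
  proof
    fix v assume "v \<in> fib \<alpha> L i y"
    then obtain c where v: "v = (\<lambda>l. c * ?e l)"
      unfolding fib_eq_span[OF lb] by blast
    have "?e \<in> Dfib \<alpha> L n y" using fib_in_Dfib[OF lb _ e] assms(5) by simp
    then show "\<sigma> y v = tens i (\<lambda>l. d * u l) v"
      using End_section_scale[OF lb assms(2,4)] by (simp add: v \<sigma>e tens_scale_right)
  qed
  have du: "(\<lambda>l. d * u l) \<in> fib \<alpha> L m ((\<alpha> ^^ i) y)" by (rule fib_scale[OF lb u])
  have "coef \<alpha> L n m \<sigma> i y = (\<lambda>l. d * u l)" by (rule coef_eqI[where \<sigma> = \<sigma>, OF lb assms(5) du all])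
  with du all show "coef \<alpha> L n m \<sigma> i y \<in> fib \<alpha> L m ((\<alpha> ^^ i) y)"
    and "\<forall>v\<in>fib \<alpha> L i y. \<sigma> y v = tens i (coef \<alpha> L n m \<sigma> i y) v"
    by simp_all
qed

lemma coef_shift:
  fixes L :: "'a::topological_space \<Rightarrow> ('n::finite \<Rightarrow> complex) set"
  assumes lb: "line_bundle L" and "End_section \<alpha> L t T \<tau>" "subdiag \<alpha> L t m T \<tau>"
    and z: "z = (\<alpha> ^^ R) y" "z \<in> T" and "j < t" "R + t \<le> n"
    and factor: "\<And>u w. u \<in> Dfib \<alpha> L t z \<Longrightarrow> w \<in> fib \<alpha> L R y \<Longrightarrow>
       \<sigma> y (tens R u w) = tens R (\<tau> z u) w"
  shows "coef \<alpha> L n m \<sigma> (R + j) y = coef \<alpha> L t m \<tau> j z"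
proof -
  have split: "\<exists>u w. u \<in> fib \<alpha> L j z \<and> v = tens R u w \<and> \<sigma> y v = tens R (\<tau> z u) w"
    if v: "v \<in> fib \<alpha> L (R + j) y" for v
  proof -
    obtain u w where "u \<in> fib \<alpha> L j z" "w \<in> fib \<alpha> L R y" "v = tens R u w"
      using fib_split[OF v] z(1) by blast
    with factor[OF fib_in_Dfib[OF lb \<open>j < t\<close>]] show ?thesis by blast
  qed
  show ?thesis
  proof (cases "j + m < t")
    case True
    let ?c = "coef \<alpha> L t m \<tau> j z"
    have c: "?c \<in> fib \<alpha> L m ((\<alpha> ^^ j) z)" "\<forall>u\<in>fib \<alpha> L j z. \<tau> z u = tens j ?c u"
      using coef_tens[OF lb assms(2,3) z(2) True] by blast+
    have "\<sigma> y v = tens (R + j) ?c v" if "v \<in> fib \<alpha> L (R + j) y" for v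
      using split[OF that] c(2) by (auto simp: tens_assoc)
    moreover have "?c \<in> fib \<alpha> L m ((\<alpha> ^^ (R + j)) y)"
      using c(1) z(1) by (simp add: funpow_add add.commute[of R])
    moreover have "R + j + m < n" using True assms(7) by simp
    ultimately show ?thesis by (intro coef_eqI[OF lb]) auto
  next
    case False
    then have "\<tau> z u = (\<lambda>l. 0)" if "u \<in> fib \<alpha> L j z" for u
      using assms(3) z(2) \<open>j < t\<close> that unfolding subdiag_def by auto
    then have "\<sigma> y v = (\<lambda>l. 0)" if "v \<in> fib \<alpha> L (R + j) y" for v
      using split[OF that] by auto
    then have "coef \<alpha> L n m \<sigma> (R + j) y = (\<lambda>l. 0)"
      by (intro coef_eq_zero[OF lb]) blast
    with False show ?thesis by (simp add: coef_def)
  qed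
qed

lemma coef_eq_quotient:
  fixes L :: "'a::topological_space \<Rightarrow> ('n::finite \<Rightarrow> complex) set"
  assumes "line_bundle L" "End_section \<alpha> L n S \<sigma>" "subdiag \<alpha> L n m S \<sigma>" "y \<in> S" "i + m < n"
    and "e \<in> fib \<alpha> L i y" "length l0 = i" "e l0 \<noteq> 0"
  shows "coef \<alpha> L n m \<sigma> i y l = \<sigma> y e (l0 @ l) / e l0"
proof -
  have "\<sigma> y e = tens i (coef \<alpha> L n m \<sigma> i y) e"
    using coef_tens(2)[OF assms(1-5)] assms(6) by blast
  with assms(7,8) show ?thesis by (simp add: tens_append)
qed

lemma continuous_on_coef:
  fixes L :: "'a::topological_space \<Rightarrow> ('n::finite \<Rightarrow> complex) set"
  assumes lb: "line_bundle L" and "continuous_on UNIV \<alpha>"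
    and ES: "End_section \<alpha> L n S \<sigma>" and SD: "subdiag \<alpha> L n m S \<sigma>"
  shows "continuous_on S (\<lambda>y. coef \<alpha> L n m \<sigma> i y l)"
proof (cases "i + m < n")
  case True
  show ?thesis
  proof (rule continuous_on_by_open_nbhds)
    fix y0 assume "y0 \<in> S"
    obtain l0 where l0: "length l0 = i" "proj_frame \<alpha> L y0 i y0 l0 \<noteq> 0"
      using proj_frame_nonzero[OF lb] by blast
    define e where "e y = proj_frame \<alpha> L y0 i y" for y
    have e_cont: "continuous_on UNIV (\<lambda>y. e y l')" for l'
      unfolding e_def by (rule continuous_on_proj_frame[OF lb assms(2)])
    have e_fib: "e y \<in> fib \<alpha> L i y" for y
      unfolding e_def by (rule proj_frame_in_fib[OF lb])
    define V where "V = {y. e y l0 \<noteq> 0}"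
    have "open V" "y0 \<in> V"
      using open_Collect_neq[OF e_cont continuous_on_const] l0(2) by (simp_all add: V_def e_def)
    have "cont_sec S (\<lambda>y. \<sigma> y (e y))"
      using ES fib_in_Dfib[OF lb _ e_fib] True e_cont continuous_on_subset[OF e_cont subset_UNIV]
      unfolding End_section_def cont_sec_def by (meson add_lessD1)
    then have "continuous_on (S \<inter> V) (\<lambda>y. \<sigma> y (e y) (l0 @ l) / e y l0)"
      unfolding cont_sec_def V_def
      by (intro continuous_on_divide continuous_on_subset[OF e_cont subset_UNIV]) (auto intro: continuous_on_subset)
    then have "continuous_on (S \<inter> V) (\<lambda>y. coef \<alpha> L n m \<sigma> i y l)"
      by (rule continuous_on_eq) (simp add: V_def coef_eq_quotient[OF lb ES SD _ True e_fib l0(1)])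
    with \<open>open V\<close> \<open>y0 \<in> V\<close> show "\<exists>V. open V \<and> y0 \<in> V \<and> continuous_on (S \<inter> V) (\<lambda>y. coef \<alpha> L n m \<sigma> i y l)"
      by blast
  qed
qed (simp add: coef_def)

section \<open>Return times and towers\<close>

lemma inv_funpow_funpow:
  fixes f :: "'a \<Rightarrow> 'a"
  assumes "bij f"
  shows "(inv f ^^ n) ((f ^^ n) x) = x"
  using inv_fn_o_fn_is_id[OF assms] by (metis comp_apply)

lemma funpow_inv_funpow:
  fixes f :: "'a \<Rightarrow> 'a"
  assumes "bij f"
  shows "(f ^^ n) ((inv f ^^ n) x) = x"
  using fn_o_inv_fn_is_id[OF assms] by (metis comp_apply)

lemma inv_funpow_funpow_le:
  fixes f :: "'a \<Rightarrow> 'a"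
  assumes "bij f" "k \<le> n"
  shows "(inv f ^^ k) ((f ^^ n) x) = (f ^^ (n - k)) x"
proof -
  have "(f ^^ n) x = (f ^^ k) ((f ^^ (n - k)) x)"
    using assms(2) by (metis funpow_add comp_apply le_add_diff_inverse)
  then show ?thesis by (simp add: inv_funpow_funpow[OF assms(1)])
qed

lemma minimal_homeo_invariant_open:
  fixes \<alpha> :: "'a::topological_space \<Rightarrow> 'a"
  assumes "minimal_homeo \<alpha>" "open W" "\<alpha> -` W = W" "W \<noteq> {}"
  shows "W = UNIV"
proof -
  have "bij \<alpha>" and minimal: "\<And>C. closed C \<Longrightarrow> \<alpha> ` C = C \<Longrightarrow> C = {} \<or> C = UNIV"
    using assms(1) unfolding minimal_homeo_def by blast+
  then have "\<alpha> ` (- W) = - W"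
    using assms(3) by (metis bij_image_Compl_eq bij_is_surj surj_image_vimage_eq)
  then have "- W = {} \<or> - W = UNIV" using minimal assms(2) by blast
  with assms(4) show ?thesis by auto
qed

lemma open_vimage_orbit_map:
  fixes \<alpha> :: "'a::topological_space \<Rightarrow> 'a"
  assumes "minimal_homeo \<alpha>" "open U"
  shows "open ((\<lambda>x. (inv \<alpha> ^^ b) ((\<alpha> ^^ a) x)) -` U)"
proof (rule open_vimage[OF assms(2)])
  have "continuous_on UNIV \<alpha>" "continuous_on UNIV (inv \<alpha>)"
    using assms(1) unfolding minimal_homeo_def by blast+
  then show "continuous_on UNIV (\<lambda>x. (inv \<alpha> ^^ b) ((\<alpha> ^^ a) x))"
    by (intro continuous_on_compose2[OF continuous_on_funpow continuous_on_funpow]) auto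
qed

lemma minimal_homeo_orbit_meets:
  fixes \<alpha> :: "'a::topological_space \<Rightarrow> 'a"
  assumes "minimal_homeo \<alpha>" "open U" "U \<noteq> {}"
  shows "\<exists>a b. (inv \<alpha> ^^ b) ((\<alpha> ^^ a) x) \<in> U"
proof -
  have "bij \<alpha>" using assms(1) unfolding minimal_homeo_def by blast
  then have \<beta>\<alpha>: "inv \<alpha> (\<alpha> x) = x" for x by (simp add: bij_is_inj)
  define W where "W = (\<Union>a b. (\<lambda>x. (inv \<alpha> ^^ b) ((\<alpha> ^^ a) x)) -` U)"
  have "open W"
    unfolding W_def by (intro open_UN ballI open_vimage_orbit_map[OF assms(1,2)])
  have "\<alpha> x \<in> W \<longleftrightarrow> x \<in> W" for x
  proof
    assume "\<alpha> x \<in> W"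
    then obtain a b where "(inv \<alpha> ^^ b) ((\<alpha> ^^ a) (\<alpha> x)) \<in> U" unfolding W_def by auto
    then have "(inv \<alpha> ^^ b) ((\<alpha> ^^ Suc a) x) \<in> U" by (simp add: funpow_swap1)
    then show "x \<in> W" unfolding W_def by blast
  next
    assume "x \<in> W"
    then obtain a b where "(inv \<alpha> ^^ b) ((\<alpha> ^^ a) x) \<in> U" unfolding W_def by auto
    moreover have "(\<alpha> ^^ a) (\<alpha> x) = \<alpha> ((\<alpha> ^^ a) x)" by (simp add: funpow_swap1)
    ultimately have "(inv \<alpha> ^^ Suc b) ((\<alpha> ^^ a) (\<alpha> x)) \<in> U"
      by (simp add: \<beta>\<alpha> funpow_swap1[of "inv \<alpha>"])
    then show "\<alpha> x \<in> W" unfolding W_def by blast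
  qed
  then have "\<alpha> -` W = W" by auto
  moreover have "U \<subseteq> W"
    unfolding W_def by (auto intro!: exI[of _ 0])
  ultimately have "W = UNIV"
    using minimal_homeo_invariant_open[OF assms(1) \<open>open W\<close>] assms(3) by blast
  then show ?thesis unfolding W_def by blast
qed

lemma bounded_backward_visits:
  fixes \<alpha> :: "'a::topological_space \<Rightarrow> 'a"
  assumes "compact (UNIV :: 'a set)" "minimal_homeo \<alpha>" "open U" "U \<noteq> {}"
  shows "\<exists>N. \<forall>x. \<exists>k\<le>N. (inv \<alpha> ^^ k) x \<in> U"
proof -
  have "bij \<alpha>" using assms(2) unfolding minimal_homeo_def by blast
  define f where "f p x = (inv \<alpha> ^^ snd p) ((\<alpha> ^^ fst p) x)" for p :: "nat \<times> nat" and x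
  have cover: "UNIV \<subseteq> (\<Union>p. f p -` U)"
    using minimal_homeo_orbit_meets[OF assms(2-4)] by (fastforce simp: f_def)
  obtain F where "finite F" and F: "UNIV \<subseteq> (\<Union>p\<in>F. f p -` U)"
  proof (rule compactE_image[OF assms(1) _ cover])
    show "open (f p -` U)" for p unfolding f_def by (rule open_vimage_orbit_map[OF assms(2,3)])
  qed
  obtain A B where A: "\<forall>p\<in>F. fst p \<le> A" and B: "\<forall>p\<in>F. snd p \<le> B"
    using \<open>finite F\<close> finite_nat_set_iff_bounded_le[of "fst ` F"] finite_nat_set_iff_bounded_le[of "snd ` F"]
    by auto
  have "\<exists>k\<le>A + B. (inv \<alpha> ^^ k) x \<in> U" for x
  proof -
    obtain p where "p \<in> F" "f p ((inv \<alpha> ^^ A) x) \<in> U" using F by blast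
    moreover obtain a b where "p = (a, b)" by fastforce
    ultimately have "(a, b) \<in> F" and ab: "(inv \<alpha> ^^ b) ((\<alpha> ^^ a) ((inv \<alpha> ^^ A) x)) \<in> U"
      by (simp_all add: f_def)
    then have "a \<le> A" "b \<le> B" using A B by force+
    then have "(inv \<alpha> ^^ A) x = (inv \<alpha> ^^ a) ((inv \<alpha> ^^ (A - a)) x)"
      by (metis comp_apply funpow_add le_add_diff_inverse)
    then have "(\<alpha> ^^ a) ((inv \<alpha> ^^ A) x) = (inv \<alpha> ^^ (A - a)) x"
      by (simp add: funpow_inv_funpow[OF \<open>bij \<alpha>\<close>])
    with ab have "(inv \<alpha> ^^ (b + (A - a))) x \<in> U"
      by (simp add: funpow_add)
    with \<open>b \<le> B\<close> show ?thesis by (intro exI[of _ "b + (A - a)"]) auto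
  qed
  then show ?thesis by blast
qed

text \<open>\<open>x = \<alpha>^j z\<close> with \<open>z = tower_base \<alpha> Y x \<in> Y\<close> and \<open>j = tower_level \<alpha> Y x < r_Y(z)\<close>, i.e. \<open>x\<close> is on
  level \<open>j\<close> of the tower over \<open>z\<close>.\<close>
definition tower_level :: "('a \<Rightarrow> 'a) \<Rightarrow> 'a set \<Rightarrow> 'a \<Rightarrow> nat" where
  "tower_level \<alpha> Y x = (LEAST j. (inv \<alpha> ^^ j) x \<in> Y)"

definition tower_base :: "('a \<Rightarrow> 'a) \<Rightarrow> 'a set \<Rightarrow> 'a \<Rightarrow> 'a" where
  "tower_base \<alpha> Y x = (inv \<alpha> ^^ tower_level \<alpha> Y x) x"

locale bounded_return =
  fixes \<alpha> :: "'a \<Rightarrow> 'a" and Y :: "'a set" and N :: nat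
  assumes bij: "bij \<alpha>" and backward_visit: "\<And>x. \<exists>k\<le>N. (inv \<alpha> ^^ k) x \<in> Y"
begin

lemma forward_return: "\<exists>k. 1 \<le> k \<and> k \<le> Suc N \<and> (\<alpha> ^^ k) y \<in> Y"
proof -
  obtain k where k: "k \<le> N" "(inv \<alpha> ^^ k) ((\<alpha> ^^ Suc N) y) \<in> Y"
    using backward_visit by blast
  moreover have "(inv \<alpha> ^^ k) ((\<alpha> ^^ Suc N) y) = (\<alpha> ^^ (Suc N - k)) y"
    using k(1) by (intro inv_funpow_funpow_le[OF bij]) simp
  ultimately show ?thesis by (intro exI[of _ "Suc N - k"]) auto
qed

lemma rY_return: "1 \<le> rY \<alpha> Y y" "(\<alpha> ^^ rY \<alpha> Y y) y \<in> Y"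
  using LeastI_ex[of "\<lambda>k. 1 \<le> k \<and> (\<alpha> ^^ k) y \<in> Y"] forward_return unfolding rY_def by blast+

lemma rY_le: "rY \<alpha> Y y \<le> Suc N"
  using forward_return[of y] Least_le[of "\<lambda>k. 1 \<le> k \<and> (\<alpha> ^^ k) y \<in> Y"]
  unfolding rY_def by (meson order.trans)

lemma not_in_before_rY: "1 \<le> k \<Longrightarrow> k < rY \<alpha> Y y \<Longrightarrow> (\<alpha> ^^ k) y \<notin> Y"
  using not_less_Least[of k "\<lambda>k. 1 \<le> k \<and> (\<alpha> ^^ k) y \<in> Y"] unfolding rY_def by blast

lemma finite_Rset: "finite (Rset \<alpha> Y)"
  by (rule finite_subset[of _ "{..Suc N}"]) (auto simp: Rset_def rY_le)

lemma tower_base_in: "tower_base \<alpha> Y x \<in> Y"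
  unfolding tower_base_def tower_level_def
  using LeastI_ex[of "\<lambda>j. (inv \<alpha> ^^ j) x \<in> Y"] backward_visit by blast

lemma funpow_tower_base: "(\<alpha> ^^ tower_level \<alpha> Y x) (tower_base \<alpha> Y x) = x"
  unfolding tower_base_def by (rule funpow_inv_funpow[OF bij])

lemma tower_level_less: "tower_level \<alpha> Y x < rY \<alpha> Y (tower_base \<alpha> Y x)"
proof (rule ccontr)
  let ?j = "tower_level \<alpha> Y x" and ?r = "rY \<alpha> Y (tower_base \<alpha> Y x)"
  assume "\<not> ?j < ?r"
  then have "(inv \<alpha> ^^ (?j - ?r)) x = (\<alpha> ^^ ?r) (tower_base \<alpha> Y x)"
    using inv_funpow_funpow_le[OF bij, of "?j - ?r" ?j "tower_base \<alpha> Y x"] funpow_tower_base[of x]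
      \<open>\<not> ?j < ?r\<close> by simp
  then have "(inv \<alpha> ^^ (?j - ?r)) x \<in> Y" using rY_return(2) by simp
  then have "?j \<le> ?j - ?r" unfolding tower_level_def by (rule Least_le)
  with \<open>\<not> ?j < ?r\<close> rY_return(1)[of "tower_base \<alpha> Y x"] show False by linarith
qed

lemma tower_coordinates:
  assumes "z \<in> Y" "j < rY \<alpha> Y z"
  shows "tower_level \<alpha> Y ((\<alpha> ^^ j) z) = j" and "tower_base \<alpha> Y ((\<alpha> ^^ j) z) = z"
proof -
  show level: "tower_level \<alpha> Y ((\<alpha> ^^ j) z) = j"
    unfolding tower_level_def
  proof (rule Least_equality)
    show "(inv \<alpha> ^^ j) ((\<alpha> ^^ j) z) \<in> Y" using assms(1) by (simp add: inv_funpow_funpow[OF bij])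
  next
    fix j' assume visit: "(inv \<alpha> ^^ j') ((\<alpha> ^^ j) z) \<in> Y"
    show "j \<le> j'"
    proof (rule ccontr)
      assume "\<not> j \<le> j'"
      then have "(inv \<alpha> ^^ j') ((\<alpha> ^^ j) z) = (\<alpha> ^^ (j - j')) z"
        by (intro inv_funpow_funpow_le[OF bij]) simp
      with visit not_in_before_rY[of "j - j'" z] assms(2) \<open>\<not> j \<le> j'\<close> show False by simp
    qed
  qed
  show "tower_base \<alpha> Y ((\<alpha> ^^ j) z) = z"
    unfolding tower_base_def level by (rule inv_funpow_funpow[OF bij])
qed

lemma in_tower: "\<exists>n\<in>Rset \<alpha> Y. \<exists>i<n. x \<in> (\<alpha> ^^ i) ` Ysub \<alpha> Y n"
proof -
  let ?z = "tower_base \<alpha> Y x"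
  have "?z \<in> Ysub \<alpha> Y (rY \<alpha> Y ?z)" "rY \<alpha> Y ?z \<in> Rset \<alpha> Y"
    using tower_base_in by (simp_all add: Ysub_def Rset_def)
  then show ?thesis
    using tower_level_less[of x] funpow_tower_base[of x] by (metis image_eqI)
qed

end

section \<open>The section built on the towers\<close>

lemma sum_list_take_le:
  fixes xs :: "'a::canonically_ordered_monoid_add list"
  shows "sum_list (take k xs) \<le> sum_list xs"
  by (metis append_take_drop_id sum_list_append le_iff_add)

lemma sum_list_segment:
  fixes ts :: "nat list"
  assumes "i < sum_list ts"
  obtains s where "s < length ts" "sum_list (take s ts) \<le> i" "i < sum_list (take s ts) + ts ! s"
  using assms
proof (induction ts arbitrary: i thesis)
  case (Cons t ts)
  show ?case
  proof (cases "i < t")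
    case True
    then show ?thesis using Cons.prems(1)[of 0] by simp
  next
    case False
    with Cons.prems(2) have "i - t < sum_list ts" by simp
    then obtain s where "s < length ts" "sum_list (take s ts) \<le> i - t" "i - t < sum_list (take s ts) + ts ! s"
      using Cons.IH by blast
    with False show ?thesis using Cons.prems(1)[of "Suc s"] by simp
  qed
qed simp

definition tower_section :: "('a \<Rightarrow> 'a) \<Rightarrow> ('a \<Rightarrow> ('n \<Rightarrow> complex) set) \<Rightarrow> 'a set \<Rightarrow> nat
    \<Rightarrow> (nat \<Rightarrow> 'a \<Rightarrow> ('n list \<Rightarrow> complex) \<Rightarrow> ('n list \<Rightarrow> complex)) \<Rightarrow> 'a \<Rightarrow> 'n list \<Rightarrow> complex" where
  "tower_section \<alpha> L Y m \<sigma> x =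
     (let z = tower_base \<alpha> Y x; n = rY \<alpha> Y z in coef \<alpha> L n m (\<sigma> n) (tower_level \<alpha> Y x) z)"

lemma (in bounded_return) tower_section_funpow:
  assumes "z \<in> Y" "j < rY \<alpha> Y z"
  shows "tower_section \<alpha> L Y m \<sigma> ((\<alpha> ^^ j) z) = coef \<alpha> L (rY \<alpha> Y z) m (\<sigma> (rY \<alpha> Y z)) j z"
  using tower_coordinates[OF assms] by (simp add: tower_section_def Let_def)

lemma bdp_block:
  assumes "bdp \<alpha> L Y \<sigma>" "n \<in> Rset \<alpha> Y" "y \<in> closure (Ysub \<alpha> Y n) - Ysub \<alpha> Y n" "i < n"
  obtains R t where "t \<in> Rset \<alpha> Y" "(\<alpha> ^^ R) y \<in> Ysub \<alpha> Y t" "R \<le> i" "i < R + t" "R + t \<le> n"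
    and "\<And>u w. u \<in> Dfib \<alpha> L t ((\<alpha> ^^ R) y) \<Longrightarrow> w \<in> fib \<alpha> L R y \<Longrightarrow>
           \<sigma> n y (tens R u w) = tens R (\<sigma> t ((\<alpha> ^^ R) y) u) w"
proof -
  obtain ts where ts: "set ts \<subseteq> Rset \<alpha> Y" "sum_list ts = n"
    and visits: "\<forall>s<length ts. (\<alpha> ^^ sum_list (take s ts)) y \<in> Ysub \<alpha> Y (ts ! s)"
    and factor: "\<forall>s<length ts. \<forall>u\<in>Dfib \<alpha> L (ts ! s) ((\<alpha> ^^ sum_list (take s ts)) y).
          \<forall>w\<in>fib \<alpha> L (sum_list (take s ts)) y.
            \<sigma> n y (tens (sum_list (take s ts)) u w) =
            tens (sum_list (take s ts)) (\<sigma> (ts ! s) ((\<alpha> ^^ sum_list (take s ts)) y) u) w"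
    using assms(1-3) unfolding bdp_def by blast
  obtain s where s: "s < length ts" "sum_list (take s ts) \<le> i" "i < sum_list (take s ts) + ts ! s"
    using sum_list_segment assms(4) ts(2) by metis
  have "sum_list (take s ts) + ts ! s \<le> n"
    using sum_list_take_le[of "Suc s" ts] s(1) ts(2) by (simp add: take_Suc_conv_app_nth)
  with s ts(1) visits factor show ?thesis
    by (intro that[of "ts ! s" "sum_list (take s ts)"]) (auto dest: nth_mem)
qed

lemma tower_section_eq_coef:
  fixes L :: "'a::topological_space \<Rightarrow> ('n::finite \<Rightarrow> complex) set"
  assumes "bounded_return \<alpha> Y N" and lb: "line_bundle L"
    and ES: "\<forall>n\<in>Rset \<alpha> Y. End_section \<alpha> L n (closure (Ysub \<alpha> Y n)) (\<sigma> n)"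
    and SD: "\<forall>n\<in>Rset \<alpha> Y. subdiag \<alpha> L n m (closure (Ysub \<alpha> Y n)) (\<sigma> n)"
    and "bdp \<alpha> L Y \<sigma>"
    and n: "n \<in> Rset \<alpha> Y" and y: "y \<in> closure (Ysub \<alpha> Y n)" and "i < n"
  shows "tower_section \<alpha> L Y m \<sigma> ((\<alpha> ^^ i) y) = coef \<alpha> L n m (\<sigma> n) i y"
proof (cases "y \<in> Ysub \<alpha> Y n")
  case True
  then show ?thesis
    using bounded_return.tower_section_funpow[OF assms(1)] \<open>i < n\<close> by (auto simp: Ysub_def)
next
  case False
  with y have "y \<in> closure (Ysub \<alpha> Y n) - Ysub \<alpha> Y n" by blast
  then obtain R t where t: "t \<in> Rset \<alpha> Y" and z: "(\<alpha> ^^ R) y \<in> Ysub \<alpha> Y t"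
    and i: "R \<le> i" "i < R + t" "R + t \<le> n"
    and factor: "\<And>u w. u \<in> Dfib \<alpha> L t ((\<alpha> ^^ R) y) \<Longrightarrow> w \<in> fib \<alpha> L R y \<Longrightarrow>
           \<sigma> n y (tens R u w) = tens R (\<sigma> t ((\<alpha> ^^ R) y) u) w"
    by (rule bdp_block[OF \<open>bdp \<alpha> L Y \<sigma>\<close> n _ \<open>i < n\<close>]) blast
  let ?z = "(\<alpha> ^^ R) y"
  have "?z \<in> Y" "rY \<alpha> Y ?z = t" using z by (simp_all add: Ysub_def)
  have "i - R < t" using i(1,2) by simp
  have "(\<alpha> ^^ i) y = (\<alpha> ^^ (i - R)) ?z"
    using i(1) by (metis funpow_add comp_apply le_add_diff_inverse2)
  then have "tower_section \<alpha> L Y m \<sigma> ((\<alpha> ^^ i) y) = coef \<alpha> L t m (\<sigma> t) (i - R) ?z"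
    using bounded_return.tower_section_funpow[OF assms(1) \<open>?z \<in> Y\<close>] \<open>rY \<alpha> Y ?z = t\<close> \<open>i - R < t\<close>
    by simp
  also have "\<dots> = coef \<alpha> L n m (\<sigma> n) (R + (i - R)) y"
  proof (rule coef_shift[where T = "closure (Ysub \<alpha> Y t)", symmetric])
    show "End_section \<alpha> L t (closure (Ysub \<alpha> Y t)) (\<sigma> t)" "subdiag \<alpha> L t m (closure (Ysub \<alpha> Y t)) (\<sigma> t)"
      using ES SD t by blast+
    show "?z \<in> closure (Ysub \<alpha> Y t)" using z closure_subset by blast
  qed (fact lb refl \<open>i - R < t\<close> i(3) factor)+
  finally show ?thesis using i(1) by simp
qed

lemma tower_section_in_fib:
  fixes L :: "'a::topological_space \<Rightarrow> ('n::finite \<Rightarrow> complex) set"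
  assumes "bounded_return \<alpha> Y N" and lb: "line_bundle L"
    and ES: "\<forall>n\<in>Rset \<alpha> Y. End_section \<alpha> L n (closure (Ysub \<alpha> Y n)) (\<sigma> n)"
    and SD: "\<forall>n\<in>Rset \<alpha> Y. subdiag \<alpha> L n m (closure (Ysub \<alpha> Y n)) (\<sigma> n)"
  shows "tower_section \<alpha> L Y m \<sigma> x \<in> fib \<alpha> L m x"
proof -
  interpret bounded_return \<alpha> Y N by fact
  define z j t where "z = tower_base \<alpha> Y x" and "j = tower_level \<alpha> Y x" and "t = rY \<alpha> Y z"
  have z: "z \<in> Ysub \<alpha> Y t" using tower_base_in unfolding z_def t_def Ysub_def by simp
  then have t: "t \<in> Rset \<alpha> Y" by (auto simp: Rset_def Ysub_def)
  from z have "z \<in> closure (Ysub \<alpha> Y t)" using closure_subset by blast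
  have tower_eq: "tower_section \<alpha> L Y m \<sigma> x = coef \<alpha> L t m (\<sigma> t) j z"
    by (simp add: tower_section_def Let_def z_def j_def t_def)
  show ?thesis
  proof (cases "j + m < t")
    case True
    have "coef \<alpha> L t m (\<sigma> t) j z \<in> fib \<alpha> L m ((\<alpha> ^^ j) z)"
      using coef_tens(1)[OF lb _ _ \<open>z \<in> closure _\<close> True] ES SD t by blast
    then show ?thesis using funpow_tower_base[of x] by (simp add: tower_eq z_def j_def)
  qed (simp add: tower_eq coef_def zero_in_fib[OF lb])
qed

lemma tower_section_vanishes:
  assumes "bounded_return \<alpha> Y N" "1 \<le> j" "j \<le> m" "(\<alpha> ^^ j) x \<in> Y"
  shows "tower_section \<alpha> L Y m \<sigma> x = (\<lambda>l. 0)"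
proof -
  interpret bounded_return \<alpha> Y N by fact
  define z k t where "z = tower_base \<alpha> Y x" and "k = tower_level \<alpha> Y x" and "t = rY \<alpha> Y z"
  have "\<not> k + m < t"
  proof
    assume "k + m < t"
    have "(\<alpha> ^^ (j + k)) z = (\<alpha> ^^ j) x"
      using funpow_tower_base[of x] by (simp add: funpow_add z_def k_def)
    with \<open>k + m < t\<close> assms(2-4) not_in_before_rY[of "j + k" z] show False
      unfolding t_def by simp
  qed
  then show ?thesis
    by (simp add: tower_section_def Let_def coef_def z_def k_def t_def)
qed

lemma continuous_on_tower_section_level:
  fixes L :: "'a::topological_space \<Rightarrow> ('n::finite \<Rightarrow> complex) set"
  assumes "bounded_return \<alpha> Y N" "continuous_on UNIV \<alpha>" "continuous_on UNIV (inv \<alpha>)"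
    and lb: "line_bundle L"
    and ES: "\<forall>n\<in>Rset \<alpha> Y. End_section \<alpha> L n (closure (Ysub \<alpha> Y n)) (\<sigma> n)"
    and SD: "\<forall>n\<in>Rset \<alpha> Y. subdiag \<alpha> L n m (closure (Ysub \<alpha> Y n)) (\<sigma> n)"
    and "bdp \<alpha> L Y \<sigma>" and n: "n \<in> Rset \<alpha> Y" and "i < n"
  shows "continuous_on ((\<alpha> ^^ i) ` closure (Ysub \<alpha> Y n)) (\<lambda>x. tower_section \<alpha> L Y m \<sigma> x l)"
proof -
  interpret bounded_return \<alpha> Y N by fact
  let ?S = "closure (Ysub \<alpha> Y n)"
  have "continuous_on ?S (\<lambda>y. coef \<alpha> L n m (\<sigma> n) i y l)"
    using continuous_on_coef[OF lb assms(2)] ES SD n by blast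
  then have "continuous_on ((\<alpha> ^^ i) ` ?S) (\<lambda>x. coef \<alpha> L n m (\<sigma> n) i ((inv \<alpha> ^^ i) x) l)"
    by (rule continuous_on_compose2[OF _ continuous_on_subset[OF continuous_on_funpow[OF assms(3)]]])
      (auto simp: inv_funpow_funpow[OF bij])
  moreover have "coef \<alpha> L n m (\<sigma> n) i ((inv \<alpha> ^^ i) x) l = tower_section \<alpha> L Y m \<sigma> x l"
    if "x \<in> (\<alpha> ^^ i) ` ?S" for x
    using that tower_section_eq_coef[OF assms(1) lb ES SD \<open>bdp \<alpha> L Y \<sigma>\<close> n _ \<open>i < n\<close>]
    by (auto simp: inv_funpow_funpow[OF bij])
  ultimately show ?thesis by (rule continuous_on_eq)
qed

lemma continuous_tower_section:
  fixes \<alpha> :: "'a::t2_space \<Rightarrow> 'a" and L :: "'a \<Rightarrow> ('n::finite \<Rightarrow> complex) set"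
  assumes "bounded_return \<alpha> Y N" "compact (UNIV :: 'a set)"
    and "continuous_on UNIV \<alpha>" "continuous_on UNIV (inv \<alpha>)" "line_bundle L"
    and "\<forall>n\<in>Rset \<alpha> Y. End_section \<alpha> L n (closure (Ysub \<alpha> Y n)) (\<sigma> n)"
    and "\<forall>n\<in>Rset \<alpha> Y. subdiag \<alpha> L n m (closure (Ysub \<alpha> Y n)) (\<sigma> n)"
    and "bdp \<alpha> L Y \<sigma>"
  shows "cont_sec UNIV (tower_section \<alpha> L Y m \<sigma>)"
  unfolding cont_sec_def
proof
  fix l
  interpret bounded_return \<alpha> Y N by fact
  define I where "I = Sigma (Rset \<alpha> Y) (\<lambda>n. {..<n})"
  define P where "P p = (\<alpha> ^^ snd p) ` closure (Ysub \<alpha> Y (fst p))" for p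
  have "compact (closure S)" for S :: "'a set"
    using compact_Int_closed[OF assms(2) closed_closure] by simp
  have "(\<Union>p\<in>I. P p) = UNIV"
    using in_tower closure_subset unfolding I_def P_def by fastforce
  moreover have "finite I"
    unfolding I_def using finite_Rset by blast
  moreover have "closed (P p)" for p
    unfolding P_def using \<open>\<And>S. compact (closure S)\<close>
    by (intro compact_imp_closed compact_continuous_image
        continuous_on_subset[OF continuous_on_funpow[OF assms(3)]]) auto
  moreover have "continuous_on (P p) (\<lambda>x. tower_section \<alpha> L Y m \<sigma> x l)" if "p \<in> I" for p
    using that continuous_on_tower_section_level[OF assms(1,3-8)] by (auto simp: I_def P_def)
  ultimately show "continuous_on UNIV (\<lambda>x. tower_section \<alpha> L Y m \<sigma> x l)"
    by (metis continuous_on_closed_Union)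
qed

theorem lemma8p3:
  fixes \<alpha> :: "'a::metric_space \<Rightarrow> 'a"
    and L :: "'a \<Rightarrow> ('n::finite \<Rightarrow> complex) set"
    and Y :: "'a set"
    and \<sigma> :: "nat \<Rightarrow> 'a \<Rightarrow> ('n list \<Rightarrow> complex) \<Rightarrow> ('n list \<Rightarrow> complex)"
    and m :: nat
  assumes "compact (UNIV :: 'a set)" and "infinite (UNIV :: 'a set)"
    and "minimal_homeo \<alpha>"
    and "line_bundle L"
    and "closed Y" and "interior Y \<noteq> {}"
    and "\<forall>n\<in>Rset \<alpha> Y. End_section \<alpha> L n (closure (Ysub \<alpha> Y n)) (\<sigma> n)"
    and "bdp \<alpha> L Y \<sigma>"
    and "m < Max (Rset \<alpha> Y)"
    and "\<forall>n\<in>Rset \<alpha> Y. subdiag \<alpha> L n m (closure (Ysub \<alpha> Y n)) (\<sigma> n)"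
  shows "\<exists>G. cont_sec UNIV G \<and> (\<forall>x. G x \<in> fib \<alpha> L m x) \<and>
     (\<forall>n\<in>Rset \<alpha> Y. \<forall>i<n. \<forall>y\<in>closure (Ysub \<alpha> Y n).
        G ((\<alpha> ^^ i) y) = coef \<alpha> L n m (\<sigma> n) i y) \<and>
     (1 \<le> m \<longrightarrow> (\<forall>j\<in>{1..m}. \<forall>x. (\<alpha> ^^ j) x \<in> Y \<longrightarrow> G x = (\<lambda>l. 0)))"
proof -
  have homeo: "bij \<alpha>" "continuous_on UNIV \<alpha>" "continuous_on UNIV (inv \<alpha>)"
    using assms(3) unfolding minimal_homeo_def by blast+
  obtain N where "\<forall>x. \<exists>k\<le>N. (inv \<alpha> ^^ k) x \<in> interior Y"
    using bounded_backward_visits[OF assms(1,3) open_interior assms(6)] by blast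
  then have tower: "bounded_return \<alpha> Y N"
    using homeo(1) interior_subset by unfold_locales blast+
  show ?thesis
    using continuous_tower_section[OF tower assms(1) homeo(2,3) assms(4,7,10,8)]
      tower_section_in_fib[OF tower assms(4,7,10)]
      tower_section_eq_coef[OF tower assms(4,7,10,8)]
      tower_section_vanishes[OF tower]
    by (intro exI[of _ "tower_section \<alpha> L Y m \<sigma>"]) auto
qed

end
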